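(* Let $q\ge3$ be a prime power and let $P\subseteq[0,q-2]^n$ be an integral convex polytope which contains, up to a unimodular affine transformation, either a lattice segment of length $2$ (the points $0,e_1,2e_1$ and the segment joining them) or the unit square $[0,1]^2\times\{0\}$. Set $P_0=P$ and $P_{k+1}=P_k*P_k$ for $k\ge0$, and let $\delta_k=\delta(P_k)$. Then $\delta_{k+1}=\min\{\delta_k,\ 2\delta_k-\delta_k^2\frac{q}{q-1}\}$ for all $k\ge0$, and $\delta_k=\delta_2$ for all $k\ge2$.
   Context: The join of $P\subseteq\mathbb{R}^n$ and $Q\subseteq\mathbb{R}^m$ is $P*Q=\mathrm{conv}\big(\{(p,\mathbf{0}^m,0):p\in P\}\cup\{(\mathbf{0}^n,y,1):y\in Q\}\big)\subseteq\mathbb{R}^{n+m+1}$; thus $P_k\subseteq[0,q-2]^{n_k}$ with $n_0=n$, $n_{k+1}=2n_k+1$. For an integral convex polytope $P\subseteq[0,q-2]^n$: $\mathcal{L}_P=\mathrm{span}_{\mathbb{F}_q}\{x^p: p\in P\cap\mathbb{Z}^n\}$, $N(P)=\max_{0\neq f\in\mathcal{L}_P}|Z(f)|$ with $Z(f)$ the zero set of $f$ in $(\mathbb{F}_q^\times)^n$, and $\delta(P)=\big((q-1)^n-N(P)\big)/(q-1)^n$. *)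

theory Defs
  imports Complex_Main "HOL-Library.FuncSet" "HOL-Library.Cardinality"
begin

text \<open>Points of R^n are represented as functions nat => real that vanish
  at every index >= n.\<close>

definition in_dim :: "nat \<Rightarrow> (nat \<Rightarrow> real) \<Rightarrow> bool" where
  "in_dim n x \<longleftrightarrow> (\<forall>i\<ge>n. x i = 0)"

definition conv :: "(nat \<Rightarrow> real) set \<Rightarrow> (nat \<Rightarrow> real) set" where
  "conv S = {x. \<exists>F u. finite F \<and> F \<noteq> {} \<and> F \<subseteq> S \<and> (\<forall>v\<in>F. 0 \<le> u v) \<and>
                  sum u F = 1 \<and> x = (\<lambda>i. \<Sum>v\<in>F. u v * v i)}"

definition int_point :: "nat \<Rightarrow> (nat \<Rightarrow> real) \<Rightarrow> bool" where
  "int_point n x \<longleftrightarrow> in_dim n x \<and> (\<forall>i. x i \<in> \<int>)"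

definition integral_polytope :: "nat \<Rightarrow> (nat \<Rightarrow> real) set \<Rightarrow> bool" where
  "integral_polytope n P \<longleftrightarrow>
     (\<exists>V. finite V \<and> V \<noteq> {} \<and> (\<forall>v\<in>V. int_point n v) \<and> P = conv V)"

definition in_box :: "nat \<Rightarrow> nat \<Rightarrow> (nat \<Rightarrow> real) set \<Rightarrow> bool" where
  "in_box q n P \<longleftrightarrow> (\<forall>x\<in>P. in_dim n x \<and> (\<forall>i<n. 0 \<le> x i \<and> x i \<le> real q - 2))"

definition join :: "nat \<Rightarrow> (nat \<Rightarrow> real) set \<Rightarrow> nat \<Rightarrow> (nat \<Rightarrow> real) set \<Rightarrow> (nat \<Rightarrow> real) set" where
  "join n P m Q = conv ((\<lambda>p. \<lambda>i. if i < n then p i else 0) ` P \<union>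
      (\<lambda>y. \<lambda>i. if n \<le> i \<and> i < n + m then y (i - n) else if i = n + m then 1 else 0) ` Q)"

fun dimk :: "nat \<Rightarrow> nat \<Rightarrow> nat" where
  "dimk n 0 = n"
| "dimk n (Suc k) = 2 * dimk n k + 1"

fun Pk :: "nat \<Rightarrow> (nat \<Rightarrow> real) set \<Rightarrow> nat \<Rightarrow> (nat \<Rightarrow> real) set" where
  "Pk n P 0 = P"
| "Pk n P (Suc k) = join (dimk n k) (Pk n P k) (dimk n k) (Pk n P k)"

definition unimodular :: "nat \<Rightarrow> (nat \<Rightarrow> nat \<Rightarrow> int) \<Rightarrow> bool" where
  "unimodular n A \<longleftrightarrow> (\<exists>B::nat \<Rightarrow> nat \<Rightarrow> int. \<forall>i<n. \<forall>j<n.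
      (\<Sum>l<n. A i l * B l j) = (if i = j then 1 else 0) \<and>
      (\<Sum>l<n. B i l * A l j) = (if i = j then 1 else 0))"

definition affine_map :: "nat \<Rightarrow> (nat \<Rightarrow> nat \<Rightarrow> int) \<Rightarrow> (nat \<Rightarrow> int) \<Rightarrow> (nat \<Rightarrow> real) \<Rightarrow> (nat \<Rightarrow> real)" where
  "affine_map n A b x = (\<lambda>i. if i < n then (\<Sum>j<n. real_of_int (A i j) * x j) + real_of_int (b i) else 0)"

definition unit_vec :: "nat \<Rightarrow> nat \<Rightarrow> real" where
  "unit_vec k = (\<lambda>i. if i = k then 1 else 0)"

definition contains_segment2 :: "nat \<Rightarrow> (nat \<Rightarrow> real) set \<Rightarrow> bool" where
  "contains_segment2 n P \<longleftrightarrow> 1 \<le> n \<and> (\<exists>A b. unimodular n A \<and>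
      affine_map n A b ` conv {(\<lambda>i. 0), (\<lambda>i. 2 * unit_vec 0 i)} \<subseteq> P)"

definition contains_unit_square :: "nat \<Rightarrow> (nat \<Rightarrow> real) set \<Rightarrow> bool" where
  "contains_unit_square n P \<longleftrightarrow> 2 \<le> n \<and> (\<exists>A b. unimodular n A \<and>
      affine_map n A b ` conv {(\<lambda>i. 0), unit_vec 0, unit_vec 1, (\<lambda>i. unit_vec 0 i + unit_vec 1 i)} \<subseteq> P)"

text \<open>Lattice points of P (P inside [0,q-2]^n, so all lattice points have
  nonnegative coordinates and are represented as exponent vectors nat => nat).\<close>
definition lattice_pts :: "nat \<Rightarrow> (nat \<Rightarrow> real) set \<Rightarrow> (nat \<Rightarrow> nat) set" where
  "lattice_pts n P = {p. (\<forall>i\<ge>n. p i = 0) \<and> (\<lambda>i. real (p i)) \<in> P}"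

definition eval_poly :: "nat \<Rightarrow> (nat \<Rightarrow> nat) set \<Rightarrow> ((nat \<Rightarrow> nat) \<Rightarrow> 'a::field) \<Rightarrow> (nat \<Rightarrow> 'a) \<Rightarrow> 'a" where
  "eval_poly n L c x = (\<Sum>p\<in>L. c p * (\<Prod>i<n. x i ^ p i))"

definition torus :: "nat \<Rightarrow> (nat \<Rightarrow> 'a::field) set" where
  "torus n = PiE {..<n} (\<lambda>_. UNIV - {0})"

definition zero_count :: "nat \<Rightarrow> (nat \<Rightarrow> nat) set \<Rightarrow> ((nat \<Rightarrow> nat) \<Rightarrow> 'a::{finite,field}) \<Rightarrow> nat" where
  "zero_count n L c = card {x \<in> torus n. eval_poly n L c x = 0}"

definition NP :: "'a::{finite,field} itself \<Rightarrow> nat \<Rightarrow> (nat \<Rightarrow> real) set \<Rightarrow> nat" where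
  "NP TYPE('a) n P = Max {zero_count n (lattice_pts n P) (c :: (nat \<Rightarrow> nat) \<Rightarrow> 'a) | c.
        (\<forall>p. p \<notin> lattice_pts n P \<longrightarrow> c p = 0) \<and> (\<exists>p\<in>lattice_pts n P. c p \<noteq> 0)}"

definition delta :: "'a::{finite,field} itself \<Rightarrow> nat \<Rightarrow> (nat \<Rightarrow> real) set \<Rightarrow> real" where
  "delta TYPE('a) n P = ((real (CARD('a)) - 1) ^ n - real (NP TYPE('a) n P)) / (real (CARD('a)) - 1) ^ n"

end

theory Submission
  imports Defs
begin

text \<open>The lattice points of P * P are those of P together with their lifts (0, p, 1). Hence on
  the torus of P * P, a product of two copies of the torus of P and one more coordinate t, every
  f supported on P * P reads g(y) + t h(z) with g, h supported on P. Counting the admissible t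
  for each (y, z) gives exactly A B (q - 1) + (T - A)(T - B) zeros, where A, B are the zero counts
  of g, h and T = (q - 1)^m is the size of the torus of P. Each of A, B is at most N = N(P) or,
  if that polynomial vanishes, equal to T, and not both vanish. The count is bilinear, hence
  maximal at a corner, and the corner A = B = 0, worth T^2, does not exceed the corners (N, T)
  and (N, N) as soon as N = 0 or T \<le> (q - 1) N. This gap condition holds for every nonempty set
  of exponents (the largest fibre of a ratio of two monomials is the zero set of a binomial) and
  is inherited by joins. So N(P * P) = max (N T (q - 1)) (N^2 (q - 1) + (T - N)^2), which is the
  recursion for \<delta>. After one step c \<delta> \<le> 1 with c = q / (q - 1), so from then on the minimum
  is \<delta> itself.\<close>

section \<open>Convex hulls\<close>

lemma conv_inc: "v \<in> S \<Longrightarrow> v \<in> conv S"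
  unfolding conv_def
  by (rule CollectI, rule exI[of _ "{v}"], rule exI[of _ "\<lambda>_. 1"]) auto

lemma conv_convex_combination:
  assumes F: "finite F" and g: "\<forall>v\<in>F. g v \<in> conv S" and u: "\<forall>v\<in>F. 0 \<le> u v" and s: "sum u F = 1"
  shows "(\<lambda>i. \<Sum>v\<in>F. u v * g v i) \<in> conv S"
proof -
  define Q where "Q v Gv av \<longleftrightarrow> finite Gv \<and> Gv \<noteq> {} \<and> Gv \<subseteq> S \<and> (\<forall>w\<in>Gv. 0 \<le> av w) \<and>
      sum av Gv = 1 \<and> g v = (\<lambda>i. \<Sum>w\<in>Gv. av w * w i)" for v Gv and av :: "(nat \<Rightarrow> real) \<Rightarrow> real"
  have "\<forall>v\<in>F. \<exists>Gv av. Q v Gv av" using g unfolding conv_def Q_def by blast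
  then obtain G a where "\<forall>v\<in>F. Q v (G v) (a v)" by metis
  then have G: "\<forall>v\<in>F. finite (G v) \<and> G v \<noteq> {} \<and> G v \<subseteq> S \<and> (\<forall>w\<in>G v. 0 \<le> a v w) \<and>
      sum (a v) (G v) = 1 \<and> g v = (\<lambda>i. \<Sum>w\<in>G v. a v w * w i)" unfolding Q_def by blast
  define H where "H = (\<Union>v\<in>F. G v)"
  define a' where "a' v w = (if w \<in> G v then a v w else 0)" for v w
  define b where "b w = (\<Sum>v\<in>F. u v * a' v w)" for w
  have Hf: "finite H" using F G unfolding H_def by auto
  have Hne: "H \<noteq> {}" using s G unfolding H_def by auto
  have HS: "H \<subseteq> S" using G unfolding H_def by auto
  have b0: "\<forall>w\<in>H. 0 \<le> b w" unfolding b_def a'_def using u G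
    by (auto intro!: sum_nonneg mult_nonneg_nonneg)
  have restrict_H: "(\<Sum>w\<in>H. a' v w * f w) = (\<Sum>w\<in>G v. a v w * f w)" if v: "v \<in> F" for v f
  proof -
    have "(\<Sum>w\<in>H. a' v w * f w) = (\<Sum>w\<in>H. if w \<in> G v then a v w * f w else 0)"
      unfolding a'_def by (rule sum.cong) auto
    also have "\<dots> = (\<Sum>w\<in>H \<inter> G v. a v w * f w)"
      by (rule sum.inter_restrict[OF Hf, symmetric])
    also have "H \<inter> G v = G v" using v unfolding H_def by auto
    finally show ?thesis .
  qed
  have "sum b H = (\<Sum>v\<in>F. u v * (\<Sum>w\<in>H. a' v w * 1))"
    unfolding b_def by (simp add: sum.swap[of _ H] sum_distrib_left)
  also have "\<dots> = (\<Sum>v\<in>F. u v)"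
    using G restrict_H[of _ "\<lambda>_. 1"] by (intro sum.cong) simp_all
  finally have sb: "sum b H = 1" using s by simp
  have "(\<lambda>i. \<Sum>v\<in>F. u v * g v i) = (\<lambda>i. \<Sum>v\<in>F. u v * (\<Sum>w\<in>H. a' v w * w i))"
    using G by (intro ext sum.cong) (simp_all add: restrict_H)
  also have "\<dots> = (\<lambda>i. \<Sum>w\<in>H. b w * w i)"
    unfolding b_def by (simp add: sum.swap[of _ F] sum_distrib_left sum_distrib_right mult.assoc)
  finally show ?thesis unfolding conv_def using Hf Hne HS b0 sb by blast
qed

lemma conv_conv_subset: "conv (conv S) \<subseteq> conv S"
proof
  fix x assume "x \<in> conv (conv S)"
  then obtain F u where "finite F" "F \<subseteq> conv S" "\<forall>v\<in>F. 0 \<le> u v" "sum u F = 1"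
     "x = (\<lambda>i. \<Sum>v\<in>F. u v * v i)" unfolding conv_def by blast
  then show "x \<in> conv S" using conv_convex_combination[of F "\<lambda>v. v" S u] by auto
qed

lemma conv_coordinate_bounds:
  assumes "\<forall>v\<in>S. lo \<le> v i \<and> v i \<le> hi" and "x \<in> conv S"
  shows "lo \<le> x i \<and> x i \<le> hi"
proof -
  from assms(2) obtain F u where F: "F \<subseteq> S" "\<forall>v\<in>F. 0 \<le> u v" "sum u F = 1"
     "x = (\<lambda>i. \<Sum>v\<in>F. u v * v i)" unfolding conv_def by blast
  have "lo = (\<Sum>v\<in>F. u v * lo)" "hi = (\<Sum>v\<in>F. u v * hi)"
    using F(3) by (simp_all add: sum_distrib_right[symmetric])
  moreover have "(\<Sum>v\<in>F. u v * lo) \<le> x i" "x i \<le> (\<Sum>v\<in>F. u v * hi)"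
    unfolding F(4) using F(1,2) assms(1) by (auto intro!: sum_mono mult_left_mono)
  ultimately show ?thesis by linarith
qed

lemma conv_union_level:
  assumes A: "\<forall>v\<in>A. v j = a" and B: "\<forall>v\<in>B. v j = b" and "a \<noteq> b"
    and x: "x \<in> conv (A \<union> B)" and xj: "x j = a"
  shows "x \<in> conv A"
proof -
  obtain F u where F: "finite F" "F \<subseteq> A \<union> B" "\<forall>v\<in>F. 0 \<le> u v" "sum u F = 1"
    and xF: "x = (\<lambda>i. \<Sum>v\<in>F. u v * v i)" using x unfolding conv_def by blast
  define FA where "FA = F \<inter> A"
  have split: "sum f F = sum f FA + sum f (F - A)" for f :: "_ \<Rightarrow> real"
    unfolding FA_def by (rule sum.Int_Diff[OF F(1)])
  have "(\<Sum>v\<in>FA. u v * v j) = a * sum u FA" "(\<Sum>v\<in>F - A. u v * v j) = b * sum u (F - A)"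
    using A B F(2) unfolding FA_def by (auto simp: sum_distrib_left mult.commute intro!: sum.cong)
  then have "a = a * sum u FA + b * sum u (F - A)" using xj split[of "\<lambda>v. u v * v j"] xF by simp
  also have "sum u FA = 1 - sum u (F - A)" using F(4) split[of u] by simp
  finally have "(b - a) * sum u (F - A) = 0" by (auto simp: algebra_simps)
  then have "sum u (F - A) = 0" using \<open>a \<noteq> b\<close> by (metis eq_iff_diff_eq_0 mult_eq_0_iff)
  then have u0: "\<forall>v\<in>F - A. u v = 0" using F(1,3) sum_nonneg_eq_0_iff[of "F - A" u] by auto
  have "sum u FA = 1" using F(4) split[of u] \<open>sum u (F - A) = 0\<close> by simp
  moreover have "x = (\<lambda>i. \<Sum>v\<in>FA. u v * v i)"
    using xF split u0 by (simp add: fun_eq_iff)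
  moreover have "finite FA" "FA \<subseteq> A" using F(1) unfolding FA_def by auto
  ultimately show ?thesis unfolding conv_def using F(3) FA_def by fastforce
qed

section \<open>The join of a polytope with itself\<close>

text \<open>The join of P with itself is spanned by P and the copy \<open>y \<mapsto> (0, y, 1)\<close> of P.\<close>

definition top_copy :: "nat \<Rightarrow> (nat \<Rightarrow> 'b::zero_neq_one) \<Rightarrow> nat \<Rightarrow> 'b" where
  "top_copy m y = (\<lambda>i. if m \<le> i \<and> i < m + m then y (i - m) else if i = m + m then 1 else 0)"

definition top_part :: "nat \<Rightarrow> (nat \<Rightarrow> 'b::zero) \<Rightarrow> nat \<Rightarrow> 'b" where
  "top_part m x = (\<lambda>i. if i < m then x (i + m) else 0)"

lemma top_part_top_copy: "\<forall>i\<ge>m. y i = 0 \<Longrightarrow> top_part m (top_copy m y) = y"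
  unfolding top_part_def top_copy_def by (auto simp: fun_eq_iff)

lemma of_nat_top_copy: "(\<lambda>i. real (top_copy m p i)) = top_copy m (\<lambda>i. real (p i))"
  unfolding top_copy_def by auto

lemma conv_top_part: "x \<in> conv S \<Longrightarrow> top_part m x \<in> conv (top_part m ` S)"
proof -
  assume "x \<in> conv S"
  then obtain F u where F: "finite F" "F \<subseteq> S" "\<forall>v\<in>F. 0 \<le> u v" "sum u F = 1"
    and xF: "x = (\<lambda>i. \<Sum>v\<in>F. u v * v i)" unfolding conv_def by blast
  have "top_part m x = (\<lambda>i. \<Sum>v\<in>F. u v * top_part m v i)"
    unfolding xF top_part_def by auto
  also have "\<dots> \<in> conv (top_part m ` S)"
    using F by (intro conv_convex_combination) (auto intro: conv_inc)
  finally show ?thesis .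
qed

lemma join_self_eq:
  assumes "\<forall>v\<in>P. in_dim m v"
  shows "join m P m P = conv (P \<union> top_copy m ` P)"
proof -
  have "(\<lambda>p. \<lambda>i. if i < m then p i else 0) ` P = id ` P"
    using assms unfolding in_dim_def by (intro image_cong) (auto simp: fun_eq_iff)
  then show ?thesis unfolding join_def top_copy_def by simp
qed

lemma in_box_in_dim: "in_box q m P \<Longrightarrow> \<forall>v\<in>P. in_dim m v"
  unfolding in_box_def by auto

lemma in_box_join_self:
  assumes box: "in_box q m P" and q3: "q \<ge> 3"
  shows "in_box q (2 * m + 1) (join m P m P)"
  unfolding in_box_def in_dim_def join_self_eq[OF in_box_in_dim[OF box]]
proof (intro ballI conjI allI impI)
  fix x i assume x: "x \<in> conv (P \<union> top_copy m ` P)"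
  define hi where "hi = (if i < 2 * m + 1 then real q - 2 else 0)"
  have "\<forall>v\<in>P \<union> top_copy m ` P. 0 \<le> v i \<and> v i \<le> hi"
    using box q3 unfolding in_box_def in_dim_def hi_def top_copy_def
    by (cases "i < m") auto
  note b = conv_coordinate_bounds[OF this x]
  show "2 * m + 1 \<le> i \<Longrightarrow> x i = 0" "i < 2 * m + 1 \<Longrightarrow> 0 \<le> x i" "i < 2 * m + 1 \<Longrightarrow> x i \<le> real q - 2"
    using b unfolding hi_def by auto
qed

lemma conv_join_level0:
  assumes dim: "\<forall>v\<in>P. in_dim m v" and cv: "conv P \<subseteq> P"
    and x: "x \<in> conv (P \<union> top_copy m ` P)" and h: "x (m + m) = 0"
  shows "x \<in> P"
proof -
  have "x \<in> conv P"
    by (rule conv_union_level[OF _ _ _ x h, where b=1]) (use dim in \<open>auto simp: in_dim_def top_copy_def\<close>)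
  then show ?thesis using cv by blast
qed

lemma conv_join_level1:
  assumes dim: "\<forall>v\<in>P. in_dim m v" and cv: "conv P \<subseteq> P"
    and x: "x \<in> conv (P \<union> top_copy m ` P)" and h: "x (m + m) = 1"
  shows "top_part m x \<in> P \<and> x = top_copy m (top_part m x)"
proof -
  have xT: "x \<in> conv (top_copy m ` P)"
    by (rule conv_union_level[of _ _ 1 _ 0]) (use dim x h in \<open>auto simp: in_dim_def top_copy_def Un_commute\<close>)
  have "top_part m ` top_copy m ` P = id ` P"
    unfolding image_image using dim unfolding in_dim_def by (intro image_cong) (auto simp: top_part_top_copy)
  then have "top_part m x \<in> P" using conv_top_part[OF xT, of m] cv by auto
  moreover have "x i = 0" if "i < m \<or> m + m < i" for i
    using conv_coordinate_bounds[OF _ xT, of 0 i 0] that unfolding top_copy_def by auto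
  then have "x = top_copy m (top_part m x)"
    using h unfolding top_copy_def top_part_def by (auto simp: fun_eq_iff not_less)
  ultimately show ?thesis ..
qed

lemma lattice_pts_join_self:
  assumes box: "in_box q m P" and cv: "conv P \<subseteq> P"
  shows "lattice_pts (2 * m + 1) (join m P m P) = lattice_pts m P \<union> top_copy m ` lattice_pts m P"
proof -
  note dim = in_box_in_dim[OF box]
  note J = join_self_eq[OF dim]
  show ?thesis
  proof
    show "lattice_pts (2 * m + 1) (join m P m P) \<subseteq> lattice_pts m P \<union> top_copy m ` lattice_pts m P"
    proof
      fix p assume "p \<in> lattice_pts (2 * m + 1) (join m P m P)"
      then have x: "(\<lambda>i. real (p i)) \<in> conv (P \<union> top_copy m ` P)"
        unfolding lattice_pts_def J by auto
      have "\<forall>v\<in>P \<union> top_copy m ` P. 0 \<le> v (m + m) \<and> v (m + m) \<le> 1"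
        using dim unfolding in_dim_def top_copy_def by auto
      then have "p (m + m) \<le> 1" using conv_coordinate_bounds[OF _ x, where lo=0 and hi=1 and i="m + m"] by simp
      then consider "p (m + m) = 0" | "p (m + m) = 1" by linarith
      then show "p \<in> lattice_pts m P \<union> top_copy m ` lattice_pts m P"
      proof cases
        case 1
        then have "(\<lambda>i. real (p i)) \<in> P" using conv_join_level0[OF dim cv x] by simp
        then show ?thesis using dim unfolding lattice_pts_def in_dim_def by auto
      next
        case 2
        have tp: "top_part m (\<lambda>i. real (p i)) = (\<lambda>i. real (top_part m p i))"
          unfolding top_part_def by auto
        have "(\<lambda>i. real (top_part m p i)) \<in> P"
            and "(\<lambda>i. real (p i)) = (\<lambda>i. real (top_copy m (top_part m p) i))"
          using conv_join_level1[OF dim cv x] 2 unfolding tp of_nat_top_copy by simp_all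
        then have "top_part m p \<in> lattice_pts m P" "p = top_copy m (top_part m p)"
          unfolding lattice_pts_def by (auto simp: top_part_def fun_eq_iff)
        then show ?thesis by blast
      qed
    qed
    show "lattice_pts m P \<union> top_copy m ` lattice_pts m P \<subseteq> lattice_pts (2 * m + 1) (join m P m P)"
      unfolding lattice_pts_def J using conv_inc
      by (auto simp: of_nat_top_copy) (auto simp: top_copy_def)
  qed
qed

section \<open>Zeros on the torus\<close>

lemma finite_torus [simp]: "finite (torus n :: (nat \<Rightarrow> 'a::{finite,field}) set)"
  unfolding torus_def by (auto intro: finite_PiE)

lemma card_torus: "card (torus n :: (nat \<Rightarrow> 'a::{finite,field}) set) = (CARD('a) - 1) ^ n"
  unfolding torus_def by (simp add: card_PiE card_Diff_singleton)

lemma torus_nonzero: "x \<in> torus n \<Longrightarrow> i < n \<Longrightarrow> x i \<noteq> 0"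
  unfolding torus_def by auto

lemma zero_count_le_card_torus:
  "zero_count n L (c :: (nat \<Rightarrow> nat) \<Rightarrow> 'a::{finite,field}) \<le> (CARD('a) - 1) ^ n"
  unfolding zero_count_def card_torus[symmetric] by (rule card_mono) auto

lemma zero_count_eq_card_torus:
  "\<forall>p\<in>L. c p = 0 \<Longrightarrow> zero_count n L (c :: (nat \<Rightarrow> nat) \<Rightarrow> 'a::{finite,field}) = (CARD('a) - 1) ^ n"
  unfolding zero_count_def card_torus[symmetric] eval_poly_def by simp

lemma zero_count_cong:
  "\<forall>p\<in>L. c p = d p \<Longrightarrow> zero_count n L (c :: (nat \<Rightarrow> nat) \<Rightarrow> 'a::{finite,field}) = zero_count n L d"
  unfolding zero_count_def eval_poly_def by simp

definition nontrivial_on :: "(nat \<Rightarrow> nat) set \<Rightarrow> ((nat \<Rightarrow> nat) \<Rightarrow> 'a::zero) \<Rightarrow> bool" where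
  "nontrivial_on L c \<longleftrightarrow> (\<forall>p. p \<notin> L \<longrightarrow> c p = 0) \<and> (\<exists>p\<in>L. c p \<noteq> 0)"

definition max_zeros :: "'a::{finite,field} itself \<Rightarrow> nat \<Rightarrow> (nat \<Rightarrow> nat) set \<Rightarrow> nat" where
  "max_zeros _ n L = Max {zero_count n L (c :: (nat \<Rightarrow> nat) \<Rightarrow> 'a) | c. nontrivial_on L c}"

lemma NP_eq_max_zeros: "NP TYPE('a::{finite,field}) n P = max_zeros TYPE('a) n (lattice_pts n P)"
  unfolding NP_def max_zeros_def nontrivial_on_def by simp

lemma finite_zero_counts:
  "finite {zero_count n L (c :: (nat \<Rightarrow> nat) \<Rightarrow> 'a::{finite,field}) | c. nontrivial_on L c}"
  by (rule finite_subset[of _ "{..(CARD('a) - 1) ^ n}"]) (use zero_count_le_card_torus in auto)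

lemma zero_count_le_max_zeros:
  assumes "\<exists>p\<in>L. c p \<noteq> 0"
  shows "zero_count n L (c :: (nat \<Rightarrow> nat) \<Rightarrow> 'a::{finite,field}) \<le> max_zeros TYPE('a) n L"
proof -
  define d where "d p = (if p \<in> L then c p else 0)" for p
  have "nontrivial_on L d" using assms unfolding nontrivial_on_def d_def by auto
  moreover have "zero_count n L c = zero_count n L d" by (rule zero_count_cong) (simp add: d_def)
  ultimately show ?thesis unfolding max_zeros_def by (intro Max_ge[OF finite_zero_counts]) blast
qed

lemma max_zeros_attained:
  assumes "L \<noteq> {}"
  obtains c :: "(nat \<Rightarrow> nat) \<Rightarrow> 'a::{finite,field}"
  where "nontrivial_on L c" "zero_count n L c = max_zeros TYPE('a) n L"
proof -
  obtain p0 where "p0 \<in> L" using assms by auto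
  then have "nontrivial_on L (\<lambda>p. if p = p0 then (1::'a) else 0)" unfolding nontrivial_on_def by auto
  then have "{zero_count n L (c :: (nat \<Rightarrow> nat) \<Rightarrow> 'a) | c. nontrivial_on L c} \<noteq> {}" by blast
  from Max_in[OF finite_zero_counts this] show ?thesis
    using that unfolding max_zeros_def by auto
qed

lemma max_zeros_le_card_torus:
  "L \<noteq> {} \<Longrightarrow> max_zeros TYPE('a::{finite,field}) n L \<le> (CARD('a) - 1) ^ n"
  by (metis max_zeros_attained zero_count_le_card_torus)

definition monom_eval :: "nat \<Rightarrow> (nat \<Rightarrow> nat) \<Rightarrow> (nat \<Rightarrow> 'a::field) \<Rightarrow> 'a" where
  "monom_eval n p x = (\<Prod>i<n. x i ^ p i)"

lemma monom_eval_nonzero: "x \<in> torus n \<Longrightarrow> monom_eval n p x \<noteq> 0"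
  unfolding monom_eval_def by (auto simp: torus_nonzero)

lemma eval_poly_monom_eval: "eval_poly n L c x = (\<Sum>p\<in>L. c p * monom_eval n p x)"
  unfolding eval_poly_def monom_eval_def ..

lemma exists_large_fibre:
  assumes "finite A" "finite C" "C \<noteq> {}" "f ` A \<subseteq> C"
  obtains c where "c \<in> C" "card A \<le> card C * card {x\<in>A. f x = c}"
proof (rule ccontr)
  assume "\<not> thesis"
  then have small: "\<forall>c\<in>C. card C * card {x\<in>A. f x = c} < card A" using that by fastforce
  have "card A = card (\<Union>c\<in>C. {x\<in>A. f x = c})"
    using assms(4) by (intro arg_cong[where f=card]) auto
  also have "\<dots> = (\<Sum>c\<in>C. card {x\<in>A. f x = c})"
    by (rule card_UN_disjoint) (use assms(1,2) in auto)
  finally have "card C * card A = card C * (\<Sum>c\<in>C. card {x\<in>A. f x = c})" by simp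
  also have "\<dots> = (\<Sum>c\<in>C. card C * card {x\<in>A. f x = c})" by (simp add: sum_distrib_left)
  also have "\<dots> < (\<Sum>c\<in>C. card A)" using assms(2,3) small by (intro sum_strict_mono) auto
  finally show False by (simp add: mult.commute)
qed

definition zero_gap :: "'a::{finite,field} itself \<Rightarrow> nat \<Rightarrow> (nat \<Rightarrow> nat) set \<Rightarrow> bool" where
  "zero_gap _ n L \<longleftrightarrow> max_zeros TYPE('a) n L = 0 \<or>
     (CARD('a) - 1) ^ n \<le> (CARD('a) - 1) * max_zeros TYPE('a) n L"

text \<open>With two exponents u \<noteq> w, the fibres of the ratio \<open>x^u / x^w\<close> partition the
  torus into \<open>q - 1\<close> pieces, and the largest one is the zero set of a binomial.\<close>

lemma zero_gap_finite:
  assumes fin: "finite L" and ne: "L \<noteq> {}"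
  shows "zero_gap TYPE('a::{finite,field}) n L"
proof (cases "\<exists>u\<in>L. \<exists>w\<in>L. u \<noteq> w")
  case False
  then obtain p0 where L: "L = {p0}" using ne by blast
  obtain c :: "(nat \<Rightarrow> nat) \<Rightarrow> 'a" where c: "nontrivial_on L c" "zero_count n L c = max_zeros TYPE('a) n L"
    using max_zeros_attained[OF ne] by blast
  have "c p0 \<noteq> 0" using c(1) L unfolding nontrivial_on_def by auto
  then have "zero_count n L c = 0" unfolding zero_count_def eval_poly_monom_eval L
    by (auto simp: monom_eval_nonzero)
  then show ?thesis using c unfolding zero_gap_def by simp
next
  case True
  then obtain u w where uw: "u \<in> L" "w \<in> L" "u \<noteq> w" by blast
  define ratio where "ratio x = monom_eval n u x / monom_eval n w x" for x :: "nat \<Rightarrow> 'a"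
  have ratio_nonzero: "ratio ` torus n \<subseteq> UNIV - {0}"
    unfolding ratio_def by (auto simp: monom_eval_nonzero)
  have "(1::'a) \<in> UNIV - {0}" by simp
  then have units_nonempty: "UNIV - {0::'a} \<noteq> {}" by blast
  obtain c0 where "c0 \<in> UNIV - {0}"
      and big: "card (torus n :: (nat \<Rightarrow> 'a) set) \<le> card (UNIV - {0::'a}) * card {x \<in> torus n. ratio x = c0}"
    by (rule exists_large_fibre[OF _ _ units_nonempty ratio_nonzero]) auto
  define cc where "cc p = (if p = u then 1 else if p = w then - c0 else 0)" for p
  have "eval_poly n L cc x = (\<Sum>p\<in>L. (if p = u then monom_eval n u x else 0) +
      (if p = w then - c0 * monom_eval n w x else 0))" for x
    unfolding eval_poly_monom_eval cc_def by (rule sum.cong) (use uw in auto)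
  then have binomial: "eval_poly n L cc x = monom_eval n u x - c0 * monom_eval n w x" for x
    by (simp add: sum.distrib uw fin)
  have "zero_count n L cc = card {x \<in> torus n. ratio x = c0}"
    unfolding zero_count_def binomial ratio_def
    by (intro arg_cong[where f=card] Collect_cong) (auto simp: monom_eval_nonzero field_simps)
  moreover have "zero_count n L cc \<le> max_zeros TYPE('a) n L"
    using uw by (intro zero_count_le_max_zeros) (auto simp: cc_def)
  moreover have "card (UNIV - {0::'a}) = CARD('a) - 1" by (simp add: card_Diff_singleton)
  ultimately show ?thesis using big unfolding zero_gap_def card_torus by (metis le_trans mult_le_mono2)
qed

section \<open>Zeros of polynomials supported on a join\<close>

lemma top_copy_notin: "\<forall>p\<in>L. \<forall>i\<ge>m. p i = 0 \<Longrightarrow> top_copy m p \<notin> L"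
  by (auto dest!: bspec[of _ _ "top_copy m p"] spec[of _ "m + m"] simp: top_copy_def)

lemma inj_on_top_copy:
  assumes "\<forall>p\<in>L. \<forall>i\<ge>m. p i = 0"
  shows "inj_on (top_copy m) L"
proof (rule inj_onI)
  fix p p' assume "p \<in> L" "p' \<in> L" and eq: "top_copy m p = top_copy m p'"
  have "p = top_part m (top_copy m p)" using assms \<open>p \<in> L\<close> by (simp add: top_part_top_copy)
  also have "\<dots> = p'" unfolding eq using assms \<open>p' \<in> L\<close> by (simp add: top_part_top_copy)
  finally show "p = p'" .
qed

lemma monom_eval_top_copy:
  "monom_eval (2 * m + 1) (top_copy m p) x = x (m + m) * monom_eval m p (\<lambda>i. x (i + m))"
proof -
  have "{..<2 * m + 1} = {..<Suc (m + m)}" by simp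
  then have "monom_eval (2 * m + 1) (top_copy m p) x =
      (\<Prod>i<m + m. x i ^ top_copy m p i) * x (m + m) ^ top_copy m p (m + m)"
    unfolding monom_eval_def by (simp only: prod.lessThan_Suc)
  also have "(\<Prod>i<m + m. x i ^ top_copy m p i) =
      (\<Prod>i\<in>{0..<m}. x i ^ top_copy m p i) * (\<Prod>i\<in>{m..<m + m}. x i ^ top_copy m p i)"
    by (simp add: atLeast0LessThan[symmetric] prod.atLeastLessThan_concat)
  also have "(\<Prod>i\<in>{m..<m + m}. x i ^ top_copy m p i) = (\<Prod>i<m. x (i + m) ^ p i)"
    using prod.shift_bounds_nat_ivl[of "\<lambda>i. x i ^ top_copy m p i" 0 m m]
    by (simp add: top_copy_def atLeast0LessThan)
  finally show ?thesis unfolding monom_eval_def by (simp add: top_copy_def)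
qed

lemma monom_eval_mono_neutral: "\<forall>i\<ge>m. p i = 0 \<Longrightarrow> m \<le> n \<Longrightarrow> monom_eval n p x = monom_eval m p x"
  unfolding monom_eval_def by (rule prod.mono_neutral_right) auto

lemma eval_poly_join:
  assumes L: "\<forall>p\<in>L. \<forall>i\<ge>m. p i = 0" and fin: "finite L"
  shows "eval_poly (2 * m + 1) (L \<union> top_copy m ` L) c (x :: nat \<Rightarrow> 'a::field) =
     eval_poly m L c x + x (m + m) * eval_poly m L (\<lambda>p. c (top_copy m p)) (\<lambda>i. x (i + m))"
proof -
  have "L \<inter> top_copy m ` L = {}" using top_copy_notin[OF L] by auto
  then have "eval_poly (2 * m + 1) (L \<union> top_copy m ` L) c x =
      (\<Sum>p\<in>L. c p * monom_eval (2 * m + 1) p x) + (\<Sum>p\<in>L. c (top_copy m p) * monom_eval (2 * m + 1) (top_copy m p) x)"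
    unfolding eval_poly_monom_eval using fin
    by (simp add: sum.union_disjoint sum.reindex[OF inj_on_top_copy[OF L]])
  also have "(\<Sum>p\<in>L. c p * monom_eval (2 * m + 1) p x) = eval_poly m L c x"
    unfolding eval_poly_monom_eval using L by (intro sum.cong) (simp_all add: monom_eval_mono_neutral)
  also have "(\<Sum>p\<in>L. c (top_copy m p) * monom_eval (2 * m + 1) (top_copy m p) x) =
      x (m + m) * eval_poly m L (\<lambda>p. c (top_copy m p)) (\<lambda>i. x (i + m))"
    unfolding eval_poly_monom_eval monom_eval_top_copy by (simp add: sum_distrib_left mult_ac)
  finally show ?thesis .
qed

definition split_join :: "nat \<Rightarrow> (nat \<Rightarrow> 'a) \<Rightarrow> (nat \<Rightarrow> 'a) \<times> (nat \<Rightarrow> 'a) \<times> 'a" where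
  "split_join m x = (restrict x {..<m}, restrict (\<lambda>i. x (i + m)) {..<m}, x (m + m))"

lemma bij_betw_split_join:
  "bij_betw (split_join m) (torus (2 * m + 1) :: (nat \<Rightarrow> 'a::{finite,field}) set)
     (torus m \<times> torus m \<times> (UNIV - {0}))"
proof (rule bij_betw_byWitness[where f'="\<lambda>(y, z, t) i. if i < m then y i else if i < m + m then z (i - m)
      else if i = m + m then t else undefined"])
qed (auto simp: torus_def split_join_def fun_eq_iff PiE_def extensional_def Pi_iff split: if_splits)

lemma eval_poly_restrict: "eval_poly n L c (restrict x {..<n}) = eval_poly n L c x"
  unfolding eval_poly_def by simp

lemma card_filter_bij_betw:
  "bij_betw f A B \<Longrightarrow> card {x\<in>A. Q (f x)} = card {y\<in>B. Q y}"
  by (rule bij_betw_same_card[of f]) (auto simp: bij_betw_def inj_on_def)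

lemma card_nonzero_roots_affine:
  "card {t \<in> UNIV - {0::'a::{finite,field}}. a + t * b = 0} =
    (if b = 0 then (if a = 0 then CARD('a) - 1 else 0) else (if a = 0 then 0 else 1))"
proof (cases "b = 0")
  case True
  have "{t::'a. t \<noteq> 0} = UNIV - {0}" by auto
  then show ?thesis using True by (simp add: card_Diff_singleton)
next
  case False
  then have "{t \<in> UNIV - {0::'a}. a + t * b = 0} = (if a = 0 then {} else {- a / b})"
    by (auto simp: field_simps add_eq_0_iff)
  then show ?thesis using False by simp
qed

lemma sum_if_const:
  "finite S \<Longrightarrow> (\<Sum>x\<in>S. if P x then a else b) = card {x\<in>S. P x} * a + (card S - card {x\<in>S. P x}) * (b::nat)"
proof -
  assume S: "finite S"
  have "S \<inter> - {x. P x} = S - {x\<in>S. P x}" "S \<inter> {x. P x} = {x\<in>S. P x}" by auto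
  then show ?thesis using S by (simp add: sum.If_cases card_Diff_subset)
qed

definition join_count :: "nat \<Rightarrow> nat \<Rightarrow> nat \<Rightarrow> nat \<Rightarrow> nat" where
  "join_count r T A B = A * (B * r) + (T - A) * (T - B)"

text \<open>For fixed y and z, the zeros t of \<open>g y + t h z\<close> are all \<open>q - 1\<close> values when
  both vanish, none when exactly one vanishes, and exactly one otherwise.\<close>

lemma zero_count_join:
  fixes c :: "(nat \<Rightarrow> nat) \<Rightarrow> 'a::{finite,field}"
  assumes L: "\<forall>p\<in>L. \<forall>i\<ge>m. p i = 0" and fin: "finite L"
  shows "zero_count (2 * m + 1) (L \<union> top_copy m ` L) c =
     join_count (CARD('a) - 1) ((CARD('a) - 1) ^ m) (zero_count m L c) (zero_count m L (\<lambda>p. c (top_copy m p)))"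
proof -
  define g where "g y = eval_poly m L c y" for y :: "nat \<Rightarrow> 'a"
  define h where "h z = eval_poly m L (\<lambda>p. c (top_copy m p)) z" for z :: "nat \<Rightarrow> 'a"
  define T where "T = (torus m :: (nat \<Rightarrow> 'a) set)"
  define A where "A = card {y\<in>T. g y = 0}"
  define B where "B = card {z\<in>T. h z = 0}"
  have finT: "finite T" unfolding T_def by simp
  define Q where "Q = (\<lambda>(y, z, t). g y + t * h z = 0)"
  have "eval_poly (2 * m + 1) (L \<union> top_copy m ` L) c x = 0 \<longleftrightarrow> Q (split_join m x)" for x
    unfolding eval_poly_join[OF L fin] Q_def split_join_def g_def h_def by (simp add: mult.commute eval_poly_restrict)
  then have "zero_count (2 * m + 1) (L \<union> top_copy m ` L) c =
      card {x \<in> (torus (2 * m + 1) :: (nat \<Rightarrow> 'a) set). Q (split_join m x)}"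
    unfolding zero_count_def by presburger
  also have "\<dots> = card {w \<in> T \<times> T \<times> (UNIV - {0}). Q w}"
    unfolding T_def by (rule card_filter_bij_betw[OF bij_betw_split_join])
  also have "{w \<in> T \<times> T \<times> (UNIV - {0}). Q w} = Sigma T (\<lambda>y. Sigma T (\<lambda>z. {t \<in> UNIV - {0}. g y + t * h z = 0}))"
    unfolding Q_def by auto
  also have "card \<dots> = (\<Sum>y\<in>T. \<Sum>z\<in>T. card {t \<in> UNIV - {0}. g y + t * h z = 0})"
    using finT by (simp add: card_SigmaI)
  also have "\<dots> = (\<Sum>y\<in>T. if g y = 0 then B * (CARD('a) - 1) else card T - B)"
    unfolding card_nonzero_roots_affine using sum_if_const[OF finT, of "\<lambda>z. h z = 0"]
    by (intro sum.cong) (auto simp: B_def)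
  also have "\<dots> = join_count (CARD('a) - 1) (card T) A B"
    using sum_if_const[OF finT, of "\<lambda>y. g y = 0"] unfolding A_def join_count_def by simp
  finally show ?thesis
    unfolding A_def B_def T_def card_torus g_def h_def zero_count_def .
qed

section \<open>The maximal number of zeros on a join\<close>

lemma affine_le_max_endpoints:
  fixes s r a N :: real
  assumes "0 \<le> a" "a \<le> N"
  shows "s * a + r \<le> max r (s * N + r)"
proof (cases "s \<ge> 0")
  case True
  then show ?thesis using assms mult_left_mono[of a N s] by simp
next
  case False
  then show ?thesis using assms by (simp add: mult_nonpos_nonneg)
qed

text \<open>The bilinear count is maximal at a corner of its domain; by the gap condition the corner
  (0, 0), worth \<open>T\<^sup>2\<close>, is dominated by (N, T), or coincides with (N, N) when N = 0.\<close>

lemma join_count_real_le: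
  fixes r N T a b :: real
  defines "F \<equiv> \<lambda>a b. a * (b * r) + (T - a) * (T - b)"
  assumes r: "0 \<le> r" and N: "0 \<le> N" "N \<le> T" and gap: "N = 0 \<or> T \<le> r * N"
    and ab: "(a = T \<and> 0 \<le> b \<and> b \<le> N) \<or> (b = T \<and> 0 \<le> a \<and> a \<le> N) \<or> (0 \<le> a \<and> a \<le> N \<and> 0 \<le> b \<and> b \<le> N)"
  shows "F a b \<le> max (F N T) (F N N)"
proof -
  define M where "M = max (F N T) (F N N)"
  have FNT: "F N T = N * (T * r)" unfolding F_def by simp
  have "T * T \<le> N * (T * r) \<or> T * T = F N N"
    using gap N mult_right_mono[of T "r * N" T] unfolding F_def by (auto simp: mult_ac)
  then have TT: "T * T \<le> M" unfolding M_def FNT by auto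
  from ab consider "a = T" "0 \<le> b" "b \<le> N" | "b = T" "0 \<le> a" "a \<le> N" | "0 \<le> a" "a \<le> N" "0 \<le> b" "b \<le> N"
    by blast
  then show ?thesis
  proof cases
    case 1
    then show ?thesis using N r mult_left_mono[of "b * r" "N * r" T]
      by (simp add: F_def mult_right_mono mult_ac)
  next
    case 2
    then show ?thesis using N r mult_right_mono[of a N "T * r"] by (simp add: F_def)
  next
    case 3
    have "F a b = ((r + 1) * b - T) * a + (T * T - T * b)" unfolding F_def by (simp add: algebra_simps)
    also have "\<dots> \<le> max (T * T - T * b) (((r + 1) * b - T) * N + (T * T - T * b))"
      using 3 by (intro affine_le_max_endpoints)
    also have "((r + 1) * b - T) * N + (T * T - T * b) = ((r + 1) * N - T) * b + (T * T - T * N)"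
      by (simp add: algebra_simps)
    also have "\<dots> \<le> max (T * T - T * N) (((r + 1) * N - T) * N + (T * T - T * N))"
      using 3 by (intro affine_le_max_endpoints)
    also have "((r + 1) * N - T) * N + (T * T - T * N) = F N N" unfolding F_def by (simp add: algebra_simps)
    finally show ?thesis
      using TT 3 N mult_nonneg_nonneg[of T b] mult_nonneg_nonneg[of T N] unfolding M_def by linarith
  qed
qed

lemma join_count_le:
  assumes NT: "N \<le> T" and gap: "N = 0 \<or> T \<le> r * N"
    and ab: "(A = T \<and> B \<le> N) \<or> (B = T \<and> A \<le> N) \<or> (A \<le> N \<and> B \<le> N)"
  shows "join_count r T A B \<le> max (join_count r T N T) (join_count r T N N)"
proof -
  have of_nat_join_count: "real (join_count r T a b) = real a * (real b * real r) + (real T - real a) * (real T - real b)"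
    if "a \<le> T" "b \<le> T" for a b using that unfolding join_count_def by (simp add: of_nat_diff)
  have AB: "A \<le> T" "B \<le> T" using ab NT by auto
  have "real N = 0 \<or> real T \<le> real r * real N"
    using gap by (metis of_nat_0 of_nat_le_iff of_nat_mult)
  then have "real (join_count r T A B) \<le> max (real (join_count r T N T)) (real (join_count r T N N))"
    unfolding of_nat_join_count[OF NT order.refl] of_nat_join_count[OF NT NT] of_nat_join_count[OF AB]
    using join_count_real_le[of "real r" "real N" "real T" "real A" "real B"] ab NT by auto
  then show ?thesis by linarith
qed

lemma zero_count_join_le:
  fixes c :: "(nat \<Rightarrow> nat) \<Rightarrow> 'a::{finite,field}" and m :: nat and L :: "(nat \<Rightarrow> nat) set"
  defines "r \<equiv> CARD('a) - 1" and "T \<equiv> (CARD('a) - 1) ^ m" and "N \<equiv> max_zeros TYPE('a) m L"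
  assumes L: "\<forall>p\<in>L. \<forall>i\<ge>m. p i = 0" and fin: "finite L" and ne: "L \<noteq> {}"
    and gap: "zero_gap TYPE('a) m L" and c: "nontrivial_on (L \<union> top_copy m ` L) c"
  shows "zero_count (2 * m + 1) (L \<union> top_copy m ` L) c \<le> max (join_count r T N T) (join_count r T N N)"
proof -
  have bound: "zero_count m L d \<le> N \<or> zero_count m L d = T \<and> (\<forall>p\<in>L. d p = 0)"
    for d :: "(nat \<Rightarrow> nat) \<Rightarrow> 'a"
  proof (cases "\<exists>p\<in>L. d p \<noteq> 0")
    case True
    then show ?thesis unfolding N_def by (simp add: zero_count_le_max_zeros)
  next
    case False
    then show ?thesis unfolding T_def by (simp add: zero_count_eq_card_torus)
  qed
  have "(\<exists>p\<in>L. c p \<noteq> 0) \<or> (\<exists>p\<in>L. c (top_copy m p) \<noteq> 0)" using c unfolding nontrivial_on_def by auto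
  then have "join_count r T (zero_count m L c) (zero_count m L (\<lambda>p. c (top_copy m p)))
      \<le> max (join_count r T N T) (join_count r T N N)"
    using bound[of c] bound[of "\<lambda>p. c (top_copy m p)"] gap max_zeros_le_card_torus[OF ne]
    by (intro join_count_le) (auto simp: zero_gap_def N_def T_def r_def)
  then show ?thesis unfolding zero_count_join[OF L fin] r_def T_def .
qed

lemma max_zeros_join:
  fixes m :: nat and L :: "(nat \<Rightarrow> nat) set"
  defines "r \<equiv> CARD('a::{finite,field}) - 1" and "T \<equiv> (CARD('a) - 1) ^ m" and "N \<equiv> max_zeros TYPE('a) m L"
  assumes L: "\<forall>p\<in>L. \<forall>i\<ge>m. p i = 0" and fin: "finite L" and ne: "L \<noteq> {}"
    and gap: "zero_gap TYPE('a) m L"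
  shows "max_zeros TYPE('a) (2 * m + 1) (L \<union> top_copy m ` L) = max (join_count r T N T) (join_count r T N N)"
proof (rule antisym)
  obtain c :: "(nat \<Rightarrow> nat) \<Rightarrow> 'a" where c: "nontrivial_on (L \<union> top_copy m ` L) c"
    and max: "zero_count (2 * m + 1) (L \<union> top_copy m ` L) c = max_zeros TYPE('a) (2 * m + 1) (L \<union> top_copy m ` L)"
    using max_zeros_attained ne by blast
  show "max_zeros TYPE('a) (2 * m + 1) (L \<union> top_copy m ` L) \<le> max (join_count r T N T) (join_count r T N N)"
    using zero_count_join_le[OF L fin ne gap c] unfolding max r_def T_def N_def .
next
  obtain c :: "(nat \<Rightarrow> nat) \<Rightarrow> 'a" where c: "nontrivial_on L c" "zero_count m L c = N"
    using max_zeros_attained[OF ne] unfolding N_def by blast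
  have notin: "\<forall>p\<in>L. top_copy m p \<notin> L" using top_copy_notin[OF L] by blast
  \<comment> \<open>the corners (N, T) and (N, N) are attained by g(y) and by g(y) + t g(z) for an optimal g\<close>
  define ca where "ca p = (if p \<in> L then c p else 0)" for p
  define cb where "cb p = (if p \<in> L then c p else if p \<in> top_copy m ` L then c (top_part m p) else 0)" for p
  have "\<forall>p\<in>L. ca p = c p" "\<forall>p\<in>L. ca (top_copy m p) = 0"
    "\<forall>p\<in>L. cb p = c p" "\<forall>p\<in>L. cb (top_copy m p) = c p"
    using notin L unfolding ca_def cb_def by (simp_all add: top_part_top_copy)
  note counts = zero_count_cong[OF this(1)] zero_count_eq_card_torus[OF this(2)]
    zero_count_cong[OF this(3)] zero_count_cong[OF this(4)]
  have "zero_count m L ca = N" "zero_count m L (\<lambda>p. ca (top_copy m p)) = T"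
      "zero_count m L cb = N" "zero_count m L (\<lambda>p. cb (top_copy m p)) = N"
    using counts c(2) unfolding T_def by simp_all
  moreover have "\<exists>p\<in>L \<union> top_copy m ` L. ca p \<noteq> 0" "\<exists>p\<in>L \<union> top_copy m ` L. cb p \<noteq> 0"
    using c(1) unfolding nontrivial_on_def ca_def cb_def by auto
  ultimately show "max (join_count r T N T) (join_count r T N N) \<le> max_zeros TYPE('a) (2 * m + 1) (L \<union> top_copy m ` L)"
    using zero_count_le_max_zeros[of "L \<union> top_copy m ` L" ca "2 * m + 1"]
      zero_count_le_max_zeros[of "L \<union> top_copy m ` L" cb "2 * m + 1"]
    unfolding zero_count_join[OF L fin] r_def T_def by simp
qed

lemma zero_gap_join:
  assumes L: "\<forall>p\<in>L. \<forall>i\<ge>m. p i = 0" and fin: "finite L" and ne: "L \<noteq> {}"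
    and gap: "zero_gap TYPE('a::{finite,field}) m L"
  shows "zero_gap TYPE('a) (2 * m + 1) (L \<union> top_copy m ` L)"
proof -
  define r where "r = CARD('a) - 1"
  define T where "T = r ^ m"
  define N where "N = max_zeros TYPE('a) m L"
  have "N = 0 \<or> T \<le> r * N" using gap unfolding zero_gap_def r_def T_def N_def by simp
  then have "T * T \<le> max (join_count r T N T) (join_count r T N N)"
    using mult_le_mono1[of T "r * N" T] unfolding join_count_def by (auto simp: mult_ac max.coboundedI1)
  then have "r * (T * T) \<le> r * max_zeros TYPE('a) (2 * m + 1) (L \<union> top_copy m ` L)"
    unfolding max_zeros_join[OF L fin ne gap] r_def T_def N_def by simp
  moreover have "r ^ (2 * m + 1) = r * (T * T)" unfolding T_def by (simp add: mult_2 power_add)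
  ultimately have "r ^ (2 * m + 1) \<le> r * max_zeros TYPE('a) (2 * m + 1) (L \<union> top_copy m ` L)"
    by (simp only:)
  then show ?thesis unfolding zero_gap_def r_def by blast
qed

section \<open>Iterated joins\<close>

lemma finite_bounded_exponents: "finite {p :: nat \<Rightarrow> nat. (\<forall>i\<ge>n. p i = 0) \<and> (\<forall>i<n. p i \<le> B)}"
proof (rule finite_subset)
  show "{p :: nat \<Rightarrow> nat. (\<forall>i\<ge>n. p i = 0) \<and> (\<forall>i<n. p i \<le> B)} \<subseteq>
      (\<lambda>f i. if i < n then f i else 0) ` PiE {..<n} (\<lambda>_. {..B})"
  proof
    fix p assume p: "p \<in> {p :: nat \<Rightarrow> nat. (\<forall>i\<ge>n. p i = 0) \<and> (\<forall>i<n. p i \<le> B)}"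
    then have "p = (\<lambda>i. if i < n then restrict p {..<n} i else 0)" by (auto simp: fun_eq_iff)
    moreover have "restrict p {..<n} \<in> PiE {..<n} (\<lambda>_. {..B})" using p by auto
    ultimately show "p \<in> (\<lambda>f i. if i < n then f i else 0) ` PiE {..<n} (\<lambda>_. {..B})" by blast
  qed
qed (auto intro: finite_PiE)

lemma finite_lattice_pts: "in_box q n P \<Longrightarrow> finite (lattice_pts n P)"
  by (rule finite_subset[OF _ finite_bounded_exponents[of n q]])
    (force simp: lattice_pts_def in_box_def)

lemma lattice_pts_nonempty:
  assumes poly: "integral_polytope n P" and box: "in_box q n P"
  shows "lattice_pts n P \<noteq> {}"
proof -
  obtain V v where V: "v \<in> V" "\<forall>v\<in>V. int_point n v" "P = conv V"
    using poly unfolding integral_polytope_def by blast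
  have vP: "v \<in> P" using V conv_inc by blast
  have "v i \<in> \<int>" for i using V unfolding int_point_def by auto
  moreover have "0 \<le> v i" for i using box vP unfolding in_box_def in_dim_def by (cases "i < n") auto
  ultimately have "(\<lambda>i. real (nat \<lfloor>v i\<rfloor>)) = v" by (auto simp: fun_eq_iff elim: Ints_cases)
  moreover have "\<forall>i\<ge>n. nat \<lfloor>v i\<rfloor> = 0" using V unfolding int_point_def in_dim_def by auto
  ultimately have "(\<lambda>i. nat \<lfloor>v i\<rfloor>) \<in> lattice_pts n P" unfolding lattice_pts_def using vP by auto
  then show ?thesis by auto
qed

lemma Pk_conv_closed_in_box:
  assumes q3: "q \<ge> 3" and poly: "integral_polytope n P" and box: "in_box q n P"
  shows "conv (Pk n P k) \<subseteq> Pk n P k \<and> in_box q (dimk n k) (Pk n P k)"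
proof (induction k)
  case 0
  then show ?case using poly box conv_conv_subset unfolding integral_polytope_def by auto
next
  case (Suc k)
  then show ?case using conv_conv_subset in_box_join_self[OF _ q3] by (simp add: join_def)
qed

lemma lattice_pts_Pk_Suc:
  assumes q3: "q \<ge> 3" and poly: "integral_polytope n P" and box: "in_box q n P"
  shows "lattice_pts (dimk n (Suc k)) (Pk n P (Suc k)) =
    lattice_pts (dimk n k) (Pk n P k) \<union> top_copy (dimk n k) ` lattice_pts (dimk n k) (Pk n P k)"
  using Pk_conv_closed_in_box[OF assms, of k] lattice_pts_join_self[of q "dimk n k" "Pk n P k"] by simp

lemma lattice_pts_Pk:
  assumes q3: "CARD('a::{finite,field}) \<ge> 3" and poly: "integral_polytope n P" and box: "in_box CARD('a) n P"
  shows "finite (lattice_pts (dimk n k) (Pk n P k)) \<and> lattice_pts (dimk n k) (Pk n P k) \<noteq> {} \<and>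
    zero_gap TYPE('a) (dimk n k) (lattice_pts (dimk n k) (Pk n P k))"
proof (induction k)
  case 0
  have "finite (lattice_pts n P)" "lattice_pts n P \<noteq> {}"
    using finite_lattice_pts[OF box] lattice_pts_nonempty[OF poly box] .
  then show ?case using zero_gap_finite by simp
next
  case (Suc k)
  have "\<forall>p\<in>lattice_pts (dimk n k) (Pk n P k). \<forall>i\<ge>dimk n k. p i = 0" unfolding lattice_pts_def by auto
  with Suc have "zero_gap TYPE('a) (2 * dimk n k + 1)
      (lattice_pts (dimk n k) (Pk n P k) \<union> top_copy (dimk n k) ` lattice_pts (dimk n k) (Pk n P k))"
    by (intro zero_gap_join) auto
  then show ?case using Suc unfolding lattice_pts_Pk_Suc[OF q3 poly box] by simp
qed

lemma max_zeros_Pk_Suc: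
  fixes P :: "(nat \<Rightarrow> real) set" and n k :: nat
  defines "r \<equiv> CARD('a::{finite,field}) - 1" and "T \<equiv> (CARD('a) - 1) ^ dimk n k"
    and "N \<equiv> max_zeros TYPE('a) (dimk n k) (lattice_pts (dimk n k) (Pk n P k))"
  assumes q3: "CARD('a) \<ge> 3" and poly: "integral_polytope n P" and box: "in_box CARD('a) n P"
  shows "max_zeros TYPE('a) (dimk n (Suc k)) (lattice_pts (dimk n (Suc k)) (Pk n P (Suc k))) =
    max (join_count r T N T) (join_count r T N N)"
proof -
  have "\<forall>p\<in>lattice_pts (dimk n k) (Pk n P k). \<forall>i\<ge>dimk n k. p i = 0" unfolding lattice_pts_def by auto
  then show ?thesis unfolding lattice_pts_Pk_Suc[OF q3 poly box] unfolding dimk.simps r_def T_def N_def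
    using lattice_pts_Pk[OF q3 poly box, of k] by (intro max_zeros_join) auto
qed

section \<open>The recursion for the relative minimum distance\<close>

lemma delta_join_formula:
  fixes T N Q :: real
  assumes T: "T > 0" and Q: "Q > 1" and N: "0 \<le> N" "N \<le> T"
  shows "((Q - 1) * (T * T) - max (N * (T * (Q - 1))) (N * (N * (Q - 1)) + (T - N) * (T - N))) / ((Q - 1) * (T * T))
     = min ((T - N) / T) (2 * ((T - N) / T) - ((T - N) / T)\<^sup>2 * Q / (Q - 1))"
proof -
  define D where "D = (Q - 1) * (T * T)"
  have D: "D > 0" unfolding D_def using T Q by simp
  have "(D - N * (T * (Q - 1))) / D = (T - N) / T" unfolding D_def using T Q
    by (simp add: field_simps)
  moreover have "(D - (N * (N * (Q - 1)) + (T - N) * (T - N))) / D =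
      2 * ((T - N) / T) - ((T - N) / T)\<^sup>2 * Q / (Q - 1)" unfolding D_def using T Q
    by (simp add: field_simps power2_eq_square)
  moreover have "(D - max a b) / D = min ((D - a) / D) ((D - b) / D)" for a b
  proof (cases "a \<le> b")
    case True
    then have "(D - b) / D \<le> (D - a) / D" using D by (intro divide_right_mono) auto
    then show ?thesis using True by (simp add: max_def min_def)
  next
    case False
    then have "(D - a) / D \<le> (D - b) / D" using D by (intro divide_right_mono) auto
    then show ?thesis using False by (simp add: max_def min_def)
  qed
  ultimately show ?thesis unfolding D_def by metis
qed

lemma delta_Pk_Suc:
  fixes P :: "(nat \<Rightarrow> real) set" and n :: nat
  assumes q3: "CARD('a::{finite,field}) \<ge> 3"
    and poly: "integral_polytope n P" and box: "in_box CARD('a) n P"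
  defines "d \<equiv> \<lambda>k. delta TYPE('a) (dimk n k) (Pk n P k)"
  shows "d (Suc k) = min (d k) (2 * d k - (d k)\<^sup>2 * real CARD('a) / (real CARD('a) - 1)) \<and> 0 \<le> d k"
proof -
  define T where "T = (CARD('a) - 1) ^ dimk n k"
  define N where "N = max_zeros TYPE('a) (dimk n k) (lattice_pts (dimk n k) (Pk n P k))"
  have NT: "N \<le> T" unfolding N_def T_def using lattice_pts_Pk[OF q3 poly box] max_zeros_le_card_torus by blast
  have rT: "real T = (real CARD('a) - 1) ^ dimk n k" unfolding T_def using q3 by (simp add: of_nat_diff)
  have Tpos: "real T > 0" unfolding rT using q3 by simp
  have dk: "d k = (real T - real N) / real T"
    unfolding d_def delta_def NP_eq_max_zeros N_def rT ..
  have max_real: "real (max (join_count (CARD('a) - 1) T N T) (join_count (CARD('a) - 1) T N N)) =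
      max (real N * (real T * (real CARD('a) - 1))) (real N * (real N * (real CARD('a) - 1)) + (real T - real N) * (real T - real N))"
    using NT q3 by (simp add: join_count_def of_nat_diff of_nat_max)
  have card_torus_Suc: "(real CARD('a) - 1) ^ dimk n (Suc k) = (real CARD('a) - 1) * (real T * real T)"
    unfolding rT by (simp add: mult_2 power_add)
  have "d (Suc k) = ((real CARD('a) - 1) * (real T * real T) -
      max (real N * (real T * (real CARD('a) - 1))) (real N * (real N * (real CARD('a) - 1)) + (real T - real N) * (real T - real N)))
      / ((real CARD('a) - 1) * (real T * real T))"
    unfolding d_def delta_def NP_eq_max_zeros max_zeros_Pk_Suc[OF q3 poly box] T_def[symmetric] N_def[symmetric]
      max_real card_torus_Suc ..
  also have "\<dots> = min (d k) (2 * d k - (d k)\<^sup>2 * real CARD('a) / (real CARD('a) - 1))"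
    unfolding dk using Tpos q3 NT by (intro delta_join_formula) auto
  finally show ?thesis using NT Tpos unfolding dk by simp
qed

lemma min_recursion_stable:
  fixes x y c :: real
  assumes c: "c > 0" and x: "x = min y (2 * y - y\<^sup>2 * c)" and x0: "x \<ge> 0"
  shows "min x (2 * x - x\<^sup>2 * c) = x"
proof -
  have "c * x \<le> c * (2 * y - y\<^sup>2 * c)" using x c by (intro mult_left_mono) auto
  also have "\<dots> = 1 - (1 - c * y)\<^sup>2" by (simp add: power2_eq_square algebra_simps)
  also have "\<dots> \<le> 1" by simp
  finally have "c * x \<le> 1" .
  then have "x * (1 - c * x) \<ge> 0" using x0 by simp
  then show ?thesis by (simp add: power2_eq_square algebra_simps)
qed

theorem mainTheorem10:
  fixes P :: "(nat \<Rightarrow> real) set" and n :: nat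
  assumes q3: "CARD('a::{finite,field}) \<ge> 3"
    and poly: "integral_polytope n P"
    and box: "in_box (CARD('a)) n P"
    and contains: "contains_segment2 n P \<or> contains_unit_square n P"
  shows "(\<forall>k. delta TYPE('a) (dimk n (Suc k)) (Pk n P (Suc k)) =
              min (delta TYPE('a) (dimk n k) (Pk n P k))
                  (2 * delta TYPE('a) (dimk n k) (Pk n P k)
                   - (delta TYPE('a) (dimk n k) (Pk n P k))\<^sup>2 * real (CARD('a)) / (real (CARD('a)) - 1)))
       \<and> (\<forall>k\<ge>2. delta TYPE('a) (dimk n k) (Pk n P k) = delta TYPE('a) (dimk n 2) (Pk n P 2))"
proof -
  define d where "d k = delta TYPE('a) (dimk n k) (Pk n P k)" for k
  define c where "c = real (CARD('a)) / (real (CARD('a)) - 1)"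
  have step: "d (Suc k) = min (d k) (2 * d k - (d k)\<^sup>2 * c)" "d k \<ge> 0" for k
    using delta_Pk_Suc[OF q3 poly box, of k] unfolding d_def c_def by (simp_all add: mult.assoc)
  have c_pos: "c > 0" unfolding c_def using q3 by simp
  have "d (Suc (Suc k)) = d (Suc k)" for k
    unfolding step(1)[of "Suc k"] by (rule min_recursion_stable[OF c_pos step(1)[of k] step(2)])
  then have "d (j + 2) = d 2" for j by (induction j) (simp_all add: numeral_2_eq_2)
  then have "\<forall>k\<ge>2. d k = d 2" by (metis le_add_diff_inverse2)
  moreover have "\<forall>k. d (Suc k) = min (d k) (2 * d k - (d k)\<^sup>2 * real CARD('a) / (real CARD('a) - 1))"
    using step(1) unfolding c_def times_divide_eq_right by blast
  ultimately show ?thesis unfolding d_def by blast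
qed

end
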